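(* Let $\Gamma$ be a symmetric bimatrix game with strategy set $C_1$ and row-player utility $u_1$, and let $N\ge2$ be finite. Let $\Gamma^{N}$ be the $N$-player game in which every player has strategy set $C_1$ and player $i$ has utility $u_i^{N}(s_1,\dots,s_N)=\sum_{j\neq i}u_1(s_i,s_j)$. Then the symmetric correlated equilibria of $\Gamma^N$ (correlated equilibria of $\Gamma^N$ whose distribution on $C_1^N$ is invariant under all permutations of the players) are exactly the $N$-exchangeable equilibria of $\Gamma$.
   Context: A symmetric bimatrix game: two players with common finite strategy set $C_1$ and utilities with $u_1(s_1,s_2)=u_2(s_2,s_1)$. For a finite game with players $i$, a correlated equilibrium is a distribution $\pi$ on strategy profiles such that for every player $i$ and all $s_i,t_i$, $\sum_{s_{-i}}[u_i(t_i,s_{-i})-u_i(s)]\pi(s)\le0$. A distribution on $C_1^N$ is $N$-exchangeable if it is invariant under all permutations of the $N$ coordinates. An $N$-exchangeable equilibrium of $\Gamma$ is an $N$-exchangeable distribution of random variables $X_1,\dots,X_N$ such that the marginal distribution of $(X_1,X_2)$ is a correlated equilibrium of $\Gamma$. *)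

theory Defs
  imports "HOL-Combinatorics.Permutations" Complex_Main
begin

definition is_dist :: "'p set \<Rightarrow> ('p \<Rightarrow> real) \<Rightarrow> bool" where
  "is_dist S \<pi> \<longleftrightarrow> (\<forall>s\<in>S. \<pi> s \<ge> 0) \<and> sum \<pi> S = 1"

definition correlated_eq ::
  "'i set \<Rightarrow> ('i \<Rightarrow> 'a set) \<Rightarrow> ('i \<Rightarrow> ('i \<Rightarrow> 'a) \<Rightarrow> real) \<Rightarrow> (('i \<Rightarrow> 'a) \<Rightarrow> real) \<Rightarrow> bool" where
  "correlated_eq I Cs U \<pi> \<longleftrightarrow>
     is_dist (PiE I Cs) \<pi> \<and>
     (\<forall>i\<in>I. \<forall>si\<in>Cs i. \<forall>ti\<in>Cs i.
        (\<Sum>s\<in>{s\<in>PiE I Cs. s i = si}. (U i (s(i := ti)) - U i s) * \<pi> s) \<le> 0)"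

definition bimatrix_util :: "('a \<Rightarrow> 'a \<Rightarrow> real) \<Rightarrow> nat \<Rightarrow> (nat \<Rightarrow> 'a) \<Rightarrow> real" where
  "bimatrix_util u i s = (if i = 0 then u (s 0) (s 1) else u (s 1) (s 0))"

definition N_util :: "nat \<Rightarrow> ('a \<Rightarrow> 'a \<Rightarrow> real) \<Rightarrow> nat \<Rightarrow> (nat \<Rightarrow> 'a) \<Rightarrow> real" where
  "N_util N u i s = (\<Sum>j\<in>{..<N} - {i}. u (s i) (s j))"

definition exchangeable :: "nat \<Rightarrow> 'a set \<Rightarrow> ((nat \<Rightarrow> 'a) \<Rightarrow> real) \<Rightarrow> bool" where
  "exchangeable N C \<pi> \<longleftrightarrow>
     is_dist (PiE {..<N} (\<lambda>_. C)) \<pi> \<and>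
     (\<forall>\<sigma>. \<sigma> permutes {..<N} \<longrightarrow> (\<forall>s\<in>PiE {..<N} (\<lambda>_. C). \<pi> (s \<circ> \<sigma>) = \<pi> s))"

text \<open>Marginal of the first two coordinates (X_1, X_2), indexed 0 and 1.\<close>

definition marginal12 :: "nat \<Rightarrow> 'a set \<Rightarrow> ((nat \<Rightarrow> 'a) \<Rightarrow> real) \<Rightarrow> (nat \<Rightarrow> 'a) \<Rightarrow> real" where
  "marginal12 N C \<pi> x = (\<Sum>s\<in>{s\<in>PiE {..<N} (\<lambda>_. C). s 0 = x 0 \<and> s 1 = x 1}. \<pi> s)"

definition exchangeable_eq :: "nat \<Rightarrow> 'a set \<Rightarrow> ('a \<Rightarrow> 'a \<Rightarrow> real) \<Rightarrow> ((nat \<Rightarrow> 'a) \<Rightarrow> real) \<Rightarrow> bool" where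
  "exchangeable_eq N C u \<pi> \<longleftrightarrow>
     exchangeable N C \<pi> \<and>
     correlated_eq {0, 1} (\<lambda>_. C) (bimatrix_util u) (marginal12 N C \<pi>)"

definition symmetric_CE :: "nat \<Rightarrow> 'a set \<Rightarrow> ('a \<Rightarrow> 'a \<Rightarrow> real) \<Rightarrow> ((nat \<Rightarrow> 'a) \<Rightarrow> real) \<Rightarrow> bool" where
  "symmetric_CE N C u \<pi> \<longleftrightarrow>
     correlated_eq {..<N} (\<lambda>_. C) (N_util N u) \<pi> \<and>
     (\<forall>\<sigma>. \<sigma> permutes {..<N} \<longrightarrow> (\<forall>s\<in>PiE {..<N} (\<lambda>_. C). \<pi> (s \<circ> \<sigma>) = \<pi> s))"

end

theory Submission
  imports Defs
begin

text \<open>Under a permutation-invariant distribution on profiles of \<open>\<Gamma>\<^sup>N\<close>, every ordered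
  pair of distinct players \<open>(i, j)\<close> has the same joint law as \<open>(0, 1)\<close>. Hence the gain
  of player \<open>i\<close> from deviating \<open>si \<mapsto> ti\<close> in \<open>\<Gamma>\<^sup>N\<close> is \<open>N - 1\<close> times the gain of the
  row player from the same deviation in \<open>\<Gamma>\<close> under the marginal of \<open>(X\<^sub>1, X\<^sub>2)\<close>, and the
  same holds for the column player by swapping the two coordinates. So both
  equilibrium conditions say that these pairwise gains are nonpositive.\<close>

definition perm_invariant :: "'i set \<Rightarrow> 'a set \<Rightarrow> (('i \<Rightarrow> 'a) \<Rightarrow> real) \<Rightarrow> bool" where
  "perm_invariant I C \<pi> \<longleftrightarrow>
     (\<forall>\<sigma>. \<sigma> permutes I \<longrightarrow> (\<forall>s\<in>PiE I (\<lambda>_. C). \<pi> (s \<circ> \<sigma>) = \<pi> s))"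

definition deviation_gain ::
  "'i set \<Rightarrow> ('i \<Rightarrow> 'a set) \<Rightarrow> ('i \<Rightarrow> ('i \<Rightarrow> 'a) \<Rightarrow> real) \<Rightarrow> (('i \<Rightarrow> 'a) \<Rightarrow> real)
     \<Rightarrow> 'i \<Rightarrow> 'a \<Rightarrow> 'a \<Rightarrow> real" where
  "deviation_gain I Cs U \<pi> i si ti =
     (\<Sum>s\<in>{s\<in>PiE I Cs. s i = si}. (U i (s(i := ti)) - U i s) * \<pi> s)"

definition pair_deviation_gain ::
  "nat \<Rightarrow> 'a set \<Rightarrow> ('a \<Rightarrow> 'a \<Rightarrow> real) \<Rightarrow> ((nat \<Rightarrow> 'a) \<Rightarrow> real) \<Rightarrow> 'a \<Rightarrow> 'a \<Rightarrow> real" where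
  "pair_deviation_gain N C u \<pi> si ti =
     (\<Sum>s\<in>PiE {..<N} (\<lambda>_. C). (if s 0 = si then u ti (s 1) - u si (s 1) else 0) * \<pi> s)"

lemma correlated_eq_iff_deviation_gain:
  "correlated_eq I Cs U \<pi> \<longleftrightarrow>
     is_dist (PiE I Cs) \<pi> \<and> (\<forall>i\<in>I. \<forall>si\<in>Cs i. \<forall>ti\<in>Cs i. deviation_gain I Cs U \<pi> i si ti \<le> 0)"
  unfolding correlated_eq_def deviation_gain_def ..

lemma permutes_two_points:
  assumes "i \<in> S" "j \<in> S" "a \<in> S" "b \<in> S" "i \<noteq> j" "a \<noteq> b"
  shows "\<exists>\<sigma>. \<sigma> permutes S \<and> \<sigma> i = a \<and> \<sigma> j = b"
proof -
  define k where "k = transpose i a j"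
  have "k \<in> S" "k \<noteq> a" using assms by (auto simp: k_def transpose_def)
  then have "transpose k b \<circ> transpose i a permutes S"
    using assms by (intro permutes_compose permutes_swap_id)
  moreover have "(transpose k b \<circ> transpose i a) i = a" "(transpose k b \<circ> transpose i a) j = b"
    using \<open>k \<noteq> a\<close> assms(6) by (auto simp: k_def transpose_def)
  ultimately show ?thesis by blast
qed

lemma PiE_comp_permutes:
  assumes "\<sigma> permutes I" "s \<in> PiE I (\<lambda>_. C)"
  shows "s \<circ> \<sigma> \<in> PiE I (\<lambda>_. C)"
  using assms permutes_in_image[OF assms(1)]
  by (auto simp: PiE_def extensional_def Pi_def permutes_not_in)

lemma bij_betw_comp_permutes_PiE:
  assumes "\<sigma> permutes I"
  shows "bij_betw (\<lambda>s. s \<circ> \<sigma>) (PiE I (\<lambda>_. C)) (PiE I (\<lambda>_. C))"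
proof (rule bij_betw_byWitness[where f' = "\<lambda>s. s \<circ> inv \<sigma>"])
  show "\<forall>s\<in>PiE I (\<lambda>_. C). s \<circ> \<sigma> \<circ> inv \<sigma> = s" "\<forall>s\<in>PiE I (\<lambda>_. C). s \<circ> inv \<sigma> \<circ> \<sigma> = s"
    using assms by (simp_all add: fun_eq_iff permutes_inverses)
  show "(\<lambda>s. s \<circ> \<sigma>) ` PiE I (\<lambda>_. C) \<subseteq> PiE I (\<lambda>_. C)"
    by (rule image_subsetI) (rule PiE_comp_permutes[OF assms])
  show "(\<lambda>s. s \<circ> inv \<sigma>) ` PiE I (\<lambda>_. C) \<subseteq> PiE I (\<lambda>_. C)"
    by (rule image_subsetI) (rule PiE_comp_permutes[OF permutes_inv[OF assms]])
qed

lemma sum_comp_permutes_perm_invariant: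
  assumes "perm_invariant I C \<pi>" "\<sigma> permutes I"
  shows "(\<Sum>s\<in>PiE I (\<lambda>_. C). g (s \<circ> \<sigma>) * \<pi> s) = (\<Sum>s\<in>PiE I (\<lambda>_. C). g s * \<pi> s)"
proof -
  have "(\<Sum>s\<in>PiE I (\<lambda>_. C). g (s \<circ> \<sigma>) * \<pi> s) = (\<Sum>s\<in>PiE I (\<lambda>_. C). g (s \<circ> \<sigma>) * \<pi> (s \<circ> \<sigma>))"
    using assms by (simp add: perm_invariant_def)
  also have "\<dots> = (\<Sum>s\<in>PiE I (\<lambda>_. C). g s * \<pi> s)"
    using sum.reindex_bij_betw[OF bij_betw_comp_permutes_PiE[OF assms(2)], of "\<lambda>s. g s * \<pi> s"] .
  finally show ?thesis .
qed

lemma sum_pair_perm_invariant: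
  fixes N :: nat
  assumes "perm_invariant {..<N} C \<pi>" "i < N" "j < N" "i \<noteq> j"
  shows "(\<Sum>s\<in>PiE {..<N} (\<lambda>_. C). h (s i) (s j) * \<pi> s)
       = (\<Sum>s\<in>PiE {..<N} (\<lambda>_. C). h (s 0) (s 1) * \<pi> s)"
proof -
  have "N \<ge> 2" using assms by linarith
  then obtain \<sigma> where \<sigma>: "\<sigma> permutes {..<N}" "\<sigma> 0 = i" "\<sigma> 1 = j"
    using permutes_two_points[of 0 "{..<N}" 1 i j] assms by auto
  show ?thesis
    using sum_comp_permutes_perm_invariant[OF assms(1) \<sigma>(1), of "\<lambda>s. h (s 0) (s 1)"] \<sigma>
    by simp
qed

lemma sum_marginal12:
  assumes "finite C" "N \<ge> 2"
  shows "(\<Sum>x\<in>PiE {0,1} (\<lambda>_. C). g x * marginal12 N C \<pi> x)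
       = (\<Sum>s\<in>PiE {..<N} (\<lambda>_. C). g (restrict s {0,1}) * \<pi> s)"
proof -
  let ?P = "PiE {..<N} (\<lambda>_. C)" and ?Q = "PiE {0::nat,1} (\<lambda>_. C)"
  have fiber: "{s\<in>?P. restrict s {0,1} = x} = {s\<in>?P. s 0 = x 0 \<and> s 1 = x 1}" if "x \<in> ?Q" for x
  proof (intro set_eqI iffI)
    fix s assume "s \<in> {s\<in>?P. s 0 = x 0 \<and> s 1 = x 1}"
    then show "s \<in> {s\<in>?P. restrict s {0,1} = x}"
      using that by (auto simp: fun_eq_iff PiE_def extensional_def)
  qed (auto simp: fun_eq_iff split: if_splits)
  have "(\<Sum>s\<in>?P. g (restrict s {0,1}) * \<pi> s)
      = (\<Sum>x\<in>?Q. \<Sum>s\<in>{s\<in>?P. restrict s {0,1} = x}. g (restrict s {0,1}) * \<pi> s)"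
    using assms by (intro sum.group[symmetric] finite_PiE) (auto simp: PiE_def)
  also have "\<dots> = (\<Sum>x\<in>?Q. g x * marginal12 N C \<pi> x)"
  proof (rule sum.cong[OF refl])
    fix x assume x: "x \<in> ?Q"
    have "(\<Sum>s\<in>{s\<in>?P. restrict s {0,1} = x}. g (restrict s {0,1}) * \<pi> s)
        = (\<Sum>s\<in>{s\<in>?P. s 0 = x 0 \<and> s 1 = x 1}. g x * \<pi> s)"
      unfolding fiber[OF x, symmetric] by (rule sum.cong) auto
    then show "(\<Sum>s\<in>{s\<in>?P. restrict s {0,1} = x}. g (restrict s {0,1}) * \<pi> s)
        = g x * marginal12 N C \<pi> x"
      by (simp add: marginal12_def sum_distrib_left)
  qed
  finally show ?thesis by simp
qed

lemma is_dist_marginal12: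
  assumes "finite C" "N \<ge> 2" "is_dist (PiE {..<N} (\<lambda>_. C)) \<pi>"
  shows "is_dist (PiE {0,1} (\<lambda>_. C)) (marginal12 N C \<pi>)"
  using assms sum_marginal12[OF assms(1,2), of "\<lambda>_. 1" \<pi>]
  unfolding is_dist_def marginal12_def by (auto intro: sum_nonneg)

lemma deviation_gain_N_util:
  assumes "perm_invariant {..<N} C \<pi>" "finite C" "i < N"
  shows "deviation_gain {..<N} (\<lambda>_. C) (N_util N u) \<pi> i si ti
       = real (N - 1) * pair_deviation_gain N C u \<pi> si ti"
proof -
  let ?P = "PiE {..<N} (\<lambda>_. C)"
  define h where "h a b = (if a = si then u ti b - u si b else 0)" for a b
  have gain_pointwise: "(if s i = si then (N_util N u i (s(i := ti)) - N_util N u i s) * \<pi> s else 0)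
      = (\<Sum>j\<in>{..<N} - {i}. h (s i) (s j)) * \<pi> s" for s
  proof -
    have "N_util N u i (s(i := ti)) - N_util N u i s = (\<Sum>j\<in>{..<N} - {i}. u ti (s j) - u (s i) (s j))"
      unfolding N_util_def sum_subtractf by (intro arg_cong2[where f = "(-)"] sum.cong) auto
    then show ?thesis by (simp add: h_def)
  qed
  have "deviation_gain {..<N} (\<lambda>_. C) (N_util N u) \<pi> i si ti
      = (\<Sum>s\<in>?P. if s i = si then (N_util N u i (s(i := ti)) - N_util N u i s) * \<pi> s else 0)"
    unfolding deviation_gain_def using assms(2) by (simp add: sum.inter_filter finite_PiE)
  also have "\<dots> = (\<Sum>j\<in>{..<N} - {i}. \<Sum>s\<in>?P. h (s i) (s j) * \<pi> s)"
    unfolding gain_pointwise sum_distrib_right by (rule sum.swap)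
  also have "\<dots> = (\<Sum>j\<in>{..<N} - {i}. \<Sum>s\<in>?P. h (s 0) (s 1) * \<pi> s)"
  proof (rule sum.cong[OF refl])
    fix j assume "j \<in> {..<N} - {i}"
    then show "(\<Sum>s\<in>?P. h (s i) (s j) * \<pi> s) = (\<Sum>s\<in>?P. h (s 0) (s 1) * \<pi> s)"
      using assms(1,3) by (intro sum_pair_perm_invariant) auto
  qed
  also have "\<dots> = real (N - 1) * pair_deviation_gain N C u \<pi> si ti"
    using assms(3) by (simp add: pair_deviation_gain_def h_def del: One_nat_def)
  finally show ?thesis .
qed

lemma deviation_gain_bimatrix_util:
  assumes "perm_invariant {..<N} C \<pi>" "finite C" "N \<ge> 2" "i \<in> {0, 1}"
  shows "deviation_gain {0,1} (\<lambda>_. C) (bimatrix_util u) (marginal12 N C \<pi>) i si ti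
       = pair_deviation_gain N C u \<pi> si ti"
proof -
  let ?Q = "PiE {0::nat,1} (\<lambda>_. C)" and ?M = "marginal12 N C \<pi>"
  define h where "h a b = (if a = si then u ti b - u si b else 0)" for a b
  define k :: nat where "k = 1 - i"
  have k: "k \<in> {0, 1}" "k \<noteq> i" using assms(4) by (auto simp: k_def)
  have "deviation_gain {0,1} (\<lambda>_. C) (bimatrix_util u) ?M i si ti
      = (\<Sum>x\<in>?Q. if x i = si then (bimatrix_util u i (x(i := ti)) - bimatrix_util u i x) * ?M x else 0)"
    unfolding deviation_gain_def using assms(2) by (simp add: sum.inter_filter finite_PiE)
  also have "\<dots> = (\<Sum>x\<in>?Q. h (x i) (x k) * ?M x)"
    using assms(4) by (intro sum.cong refl) (auto simp: h_def k_def bimatrix_util_def)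
  also have "\<dots> = (\<Sum>s\<in>PiE {..<N} (\<lambda>_. C). h (s i) (s k) * \<pi> s)"
    using sum_marginal12[OF assms(2,3), of "\<lambda>x. h (x i) (x k)" \<pi>] assms(4) k by simp
  also have "\<dots> = (\<Sum>s\<in>PiE {..<N} (\<lambda>_. C). h (s 0) (s 1) * \<pi> s)"
    using assms k by (intro sum_pair_perm_invariant) auto
  also have "\<dots> = pair_deviation_gain N C u \<pi> si ti"
    by (simp add: pair_deviation_gain_def h_def del: One_nat_def)
  finally show ?thesis .
qed

theorem proposition4p10:
  fixes C :: "'a set" and u :: "'a \<Rightarrow> 'a \<Rightarrow> real" and N :: nat
    and \<pi> :: "(nat \<Rightarrow> 'a) \<Rightarrow> real"
  assumes "finite C" and "N \<ge> 2"
  shows "symmetric_CE N C u \<pi> \<longleftrightarrow> exchangeable_eq N C u \<pi>"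
proof -
  let ?P = "PiE {..<N} (\<lambda>_. C)"
  let ?pairwise_eq = "\<forall>si\<in>C. \<forall>ti\<in>C. pair_deviation_gain N C u \<pi> si ti \<le> 0"
  have N_game: "correlated_eq {..<N} (\<lambda>_. C) (N_util N u) \<pi> \<longleftrightarrow> is_dist ?P \<pi> \<and> ?pairwise_eq"
    if "perm_invariant {..<N} C \<pi>"
  proof -
    have "real (N - 1) > 0" "\<exists>i. i < N" using assms(2) by (auto intro!: exI[of _ 0])
    then show ?thesis
      unfolding correlated_eq_iff_deviation_gain
      by (simp add: deviation_gain_N_util[OF that assms(1)] mult_le_0_iff)
  qed
  have pair_game: "correlated_eq {0,1} (\<lambda>_. C) (bimatrix_util u) (marginal12 N C \<pi>) \<longleftrightarrow> ?pairwise_eq"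
    if "perm_invariant {..<N} C \<pi>" "is_dist ?P \<pi>"
    unfolding correlated_eq_iff_deviation_gain
    using is_dist_marginal12[OF assms that(2)] deviation_gain_bimatrix_util[OF that(1) assms, where i = 0]
      deviation_gain_bimatrix_util[OF that(1) assms, where i = 1]
    by simp
  show ?thesis
    unfolding symmetric_CE_def exchangeable_eq_def exchangeable_def perm_invariant_def[symmetric]
    using N_game pair_game by blast
qed

end
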